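(* Let $L$ be a Lelek fan and let $C\subseteq L$ be a subcontinuum of $L$ that is a Cantor fan. Then $C$ is nowhere dense in $L$, i.e. $\mathrm{Int}_L(\mathrm{Cl}_L(C))=\emptyset$.
   Context: A continuum is a nonempty compact connected metric space. A dendroid is an arcwise connected, hereditarily unicoherent continuum. A point $x$ of a dendroid $X$ is a ramification point if $x$ is the top (the branch point) of some simple triod in $X$. A fan is a dendroid with at most one ramification point; this point, if it exists, is called the top of the fan. For a fan $X$, a point $x$ is an end point of $X$ if $x$ is an end point of every arc in $X$ containing $x$; $E(X)$ denotes the set of end points of $X$. A fan $X$ with top $v$ is smooth if for every $x\in X$ and every sequence $x_n\to x$ in $X$, the arcs from $v$ to $x_n$ converge (in the Hausdorff metric) to the arc from $v$ to $x$. A Lelek fan is a smooth fan $X$ with $\mathrm{Cl}(E(X))=X$. A Cantor fan is a continuum homeomorphic to $\bigcup_{c\in C}A_c\subseteq\mathbb R^2$, where $C\subseteq[0,1]$ is the Cantor middle-third set and $A_c$ is the straight segment from $(\tfrac12,0)$ to $(c,1)$. *)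

theory Defs
  imports "HOL-Analysis.Analysis"
begin

definition continuum :: "'a::metric_space set \<Rightarrow> bool" where
  "continuum X \<longleftrightarrow> X \<noteq> {} \<and> compact X \<and> connected X"

definition arc_between :: "'a::metric_space set \<Rightarrow> 'a \<Rightarrow> 'a \<Rightarrow> bool" where
  "arc_between A a b \<longleftrightarrow>
     (\<exists>g. arc g \<and> path_image g = A \<and> pathstart g = a \<and> pathfinish g = b)"

definition is_arc :: "'a::metric_space set \<Rightarrow> bool" where
  "is_arc A \<longleftrightarrow> (\<exists>a b. arc_between A a b)"

definition arcwise_connected :: "'a::metric_space set \<Rightarrow> bool" where
  "arcwise_connected X \<longleftrightarrow>
     (\<forall>x\<in>X. \<forall>y\<in>X. x \<noteq> y \<longrightarrow> (\<exists>A. A \<subseteq> X \<and> arc_between A x y))"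

definition hereditarily_unicoherent :: "'a::metric_space set \<Rightarrow> bool" where
  "hereditarily_unicoherent X \<longleftrightarrow>
     (\<forall>A B. A \<subseteq> X \<and> B \<subseteq> X \<and> continuum A \<and> continuum B \<longrightarrow> connected (A \<inter> B))"

definition dendroid :: "'a::metric_space set \<Rightarrow> bool" where
  "dendroid X \<longleftrightarrow> continuum X \<and> arcwise_connected X \<and> hereditarily_unicoherent X"

definition simple_triod_with_top :: "'a::metric_space set \<Rightarrow> 'a \<Rightarrow> bool" where
  "simple_triod_with_top T v \<longleftrightarrow>
     (\<exists>A1 A2 A3 a1 a2 a3.
        arc_between A1 v a1 \<and> arc_between A2 v a2 \<and> arc_between A3 v a3 \<and>
        A1 \<inter> A2 = {v} \<and> A1 \<inter> A3 = {v} \<and> A2 \<inter> A3 = {v} \<and>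
        T = A1 \<union> A2 \<union> A3)"

definition ramification_point :: "'a::metric_space set \<Rightarrow> 'a \<Rightarrow> bool" where
  "ramification_point X x \<longleftrightarrow> (\<exists>T. T \<subseteq> X \<and> simple_triod_with_top T x)"

definition fan :: "'a::metric_space set \<Rightarrow> bool" where
  "fan X \<longleftrightarrow> dendroid X \<and>
     (\<forall>x y. ramification_point X x \<and> ramification_point X y \<longrightarrow> x = y)"

definition end_points :: "'a::metric_space set \<Rightarrow> 'a set" where
  "end_points X = {x \<in> X. \<forall>A a b. A \<subseteq> X \<and> arc_between A a b \<and> x \<in> A \<longrightarrow> x = a \<or> x = b}"

definition hausdorff_dist :: "'a::metric_space set \<Rightarrow> 'a set \<Rightarrow> real" where
  "hausdorff_dist A B = max (SUP a\<in>A. setdist {a} B) (SUP b\<in>B. setdist {b} A)"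

text \<open>The arc from v to x in X (degenerate {v} when x = v); in a dendroid it is unique.\<close>
definition arc_in_from_to :: "'a::metric_space set \<Rightarrow> 'a \<Rightarrow> 'a \<Rightarrow> 'a set \<Rightarrow> bool" where
  "arc_in_from_to X v x A \<longleftrightarrow> A \<subseteq> X \<and> (if x = v then A = {v} else arc_between A v x)"

definition smooth_fan_with_top :: "'a::metric_space set \<Rightarrow> 'a \<Rightarrow> bool" where
  "smooth_fan_with_top X v \<longleftrightarrow> fan X \<and> ramification_point X v \<and>
     (\<forall>x s A As. x \<in> X \<and> (\<forall>n. s n \<in> X) \<and> s \<longlonglongrightarrow> x \<and>
        arc_in_from_to X v x A \<and> (\<forall>n. arc_in_from_to X v (s n) (As n))
        \<longrightarrow> (\<lambda>n. hausdorff_dist (As n) A) \<longlonglongrightarrow> 0)"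

definition lelek_fan :: "'a::metric_space set \<Rightarrow> bool" where
  "lelek_fan X \<longleftrightarrow> (\<exists>v. smooth_fan_with_top X v) \<and> closure (end_points X) = X"

definition cantor_set :: "real set" where
  "cantor_set = {x. \<exists>d::nat \<Rightarrow> nat. (\<forall>n. d n \<in> {0, 2}) \<and>
                        x = (\<Sum>n. real (d n) / 3 ^ (Suc n))}"

definition standard_cantor_fan :: "(real \<times> real) set" where
  "standard_cantor_fan = (\<Union>c\<in>cantor_set. closed_segment (1/2, 0) (c, 1))"

definition cantor_fan :: "'a::metric_space set \<Rightarrow> bool" where
  "cantor_fan X \<longleftrightarrow> X homeomorphic standard_cantor_fan"

end

theory Submission
  imports Defs
begin

text \<open>Suppose \<open>C\<close> contained a nonempty open subset \<open>U\<close> of \<open>L\<close>. An end point of \<open>L\<close> lying in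
  \<open>U\<close> is an end point of \<open>C\<close>, hence lies on the top level of the Cantor fan \<open>C\<close>, a closed
  set. Since the end points are dense in \<open>L\<close>, all of \<open>U\<close> lies on that top level. But the top
  level is homeomorphic to a subset of the Cantor set, which contains no interval, whereas \<open>U\<close>
  contains a nondegenerate subarc of \<open>L\<close>.\<close>

lemma cantor_digit_term_le:
  assumes "k \<in> {0::nat, 2}"
  shows "real k / 3 ^ Suc n \<le> 2 / 3 ^ Suc n"
  using assms by auto

lemma summable_cantor_digits:
  assumes "\<forall>n. d n \<in> {0::nat, 2}"
  shows "summable (\<lambda>n. real (d n) / 3 ^ Suc n)"
proof (rule summable_comparison_test')
  show "summable (\<lambda>n. 2 * (1/3::real) ^ Suc n)"
    by (intro summable_mult summable_ignore_initial_segment[where k=1, simplified]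
        summable_geometric) auto
  show "norm (real (d n) / 3 ^ Suc n) \<le> 2 * (1/3::real) ^ Suc n" for n
    using cantor_digit_term_le[of "d n" n] assms by (simp add: power_one_over)
qed

lemma suminf_two_thirds_powers: "(\<Sum>n. 2 / (3::real) ^ Suc n) = 1"
proof -
  have "(\<lambda>n. (2/3) * (1/3::real) ^ n) sums ((2/3) * (1 / (1 - 1/3)))"
    by (intro sums_mult geometric_sums) auto
  then show ?thesis by (simp add: power_divide sums_iff field_simps)
qed

lemma cantor_set_subset_unit_interval: "cantor_set \<subseteq> {0..1}"
proof
  fix x assume "x \<in> cantor_set"
  then obtain d where d: "\<forall>n. d n \<in> {0::nat, 2}" "x = (\<Sum>n. real (d n) / 3 ^ Suc n)"
    unfolding cantor_set_def by auto
  have "x \<le> (\<Sum>n. 2 / (3::real) ^ Suc n)"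
    unfolding d(2) using d(1) summable_cantor_digits[of "\<lambda>_. 2"]
    by (intro suminf_le summable_cantor_digits cantor_digit_term_le) auto
  moreover have "0 \<le> x"
    unfolding d(2) by (intro suminf_nonneg summable_cantor_digits d(1)) simp
  ultimately show "x \<in> {0..1}" using suminf_two_thirds_powers by simp
qed

lemma zero_in_cantor_set: "0 \<in> cantor_set"
  unfolding cantor_set_def by (rule CollectI, rule exI[of _ "\<lambda>_. 0"]) auto

lemma one_in_cantor_set: "1 \<in> cantor_set"
  unfolding cantor_set_def
  by (rule CollectI, rule exI[of _ "\<lambda>_. 2"]) (use suminf_two_thirds_powers in simp)

lemma cantor_set_first_digit:
  assumes "x \<in> cantor_set"
  obtains y where "y \<in> cantor_set" "x = y / 3 \<or> x = 2/3 + y / 3"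
proof -
  obtain d where d: "\<forall>n. d n \<in> {0::nat, 2}" "x = (\<Sum>n. real (d n) / 3 ^ Suc n)"
    using assms unfolding cantor_set_def by auto
  define y where "y = (\<Sum>n. real (d (Suc n)) / 3 ^ Suc n)"
  have y: "y \<in> cantor_set"
    unfolding cantor_set_def y_def
    by (rule CollectI, rule exI[of _ "\<lambda>n. d (Suc n)"]) (use d(1) in simp)
  have "(\<Sum>n. real (d (Suc n)) / 3 ^ Suc (Suc n)) = x - real (d 0) / 3"
    using suminf_split_head[OF summable_cantor_digits[OF d(1)]] d(2) by simp
  moreover have "(\<Sum>n. real (d (Suc n)) / 3 ^ Suc (Suc n)) = y / 3"
    using suminf_mult[OF summable_cantor_digits[of "\<lambda>n. d (Suc n)"], of "1/3"] d(1)
    by (simp add: y_def)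
  ultimately have "x = real (d 0) / 3 + y / 3" by simp
  moreover have "d 0 = 0 \<or> d 0 = 2" using d(1) by blast
  ultimately show thesis using that y by auto
qed

lemma cantor_set_gap:
  assumes "x \<in> cantor_set"
  shows "x \<le> 1/3 \<or> 2/3 \<le> x"
proof -
  obtain y where "y \<in> cantor_set" "x = y / 3 \<or> x = 2/3 + y / 3"
    using cantor_set_first_digit[OF assms] by blast
  moreover from this(1) have "0 \<le> y" "y \<le> 1" using cantor_set_subset_unit_interval by auto
  ultimately show ?thesis by auto
qed

lemma cantor_set_left_third:
  assumes "x \<in> cantor_set" "x \<le> 1/3"
  shows "3 * x \<in> cantor_set"
proof -
  obtain y where y: "y \<in> cantor_set" "x = y / 3 \<or> x = 2/3 + y / 3"
    using cantor_set_first_digit[OF assms(1)] by blast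
  then have "x = y / 3" using assms(2) cantor_set_subset_unit_interval by force
  then have "3 * x = y" by simp
  then show ?thesis using y(1) by simp
qed

lemma cantor_set_right_third:
  assumes "x \<in> cantor_set" "2/3 \<le> x"
  shows "3 * x - 2 \<in> cantor_set"
proof -
  obtain y where y: "y \<in> cantor_set" "x = y / 3 \<or> x = 2/3 + y / 3"
    using cantor_set_first_digit[OF assms(1)] by blast
  then have "x = 2/3 + y / 3" using assms(2) cantor_set_subset_unit_interval by force
  then show ?thesis using y(1) by simp
qed

text \<open>An interval inside one third of the Cantor set is blown up by the similarity of that
  third, which triples its length.\<close>
lemma cantor_set_interval_length:
  assumes "{a..b} \<subseteq> cantor_set" "a \<le> b"
  shows "b - a \<le> (1/3) ^ n"
  using assms
proof (induction n arbitrary: a b)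
  case 0
  then have "a \<in> cantor_set" "b \<in> cantor_set" by auto
  then have "a \<in> {0..1}" "b \<in> {0..1}" using cantor_set_subset_unit_interval by blast+
  then show ?case by simp
next
  case (Suc n)
  show ?case
  proof (cases "a \<le> 1/3")
    case True
    have "b \<le> 1/3"
    proof (rule ccontr)
      assume "\<not> b \<le> 1/3"
      then have m: "min b (1/2) \<in> {a..b}" "1/3 < min b (1/2)" "min b (1/2) < 2/3"
        using True Suc.prems(2) by auto
      have "min b (1/2) \<in> cantor_set" using m(1) Suc.prems(1) by blast
      from cantor_set_gap[OF this] m(2,3) show False by linarith
    qed
    have "{3*a..3*b} \<subseteq> cantor_set"
    proof
      fix z assume "z \<in> {3*a..3*b}"
      then have "z/3 \<in> cantor_set" "z/3 \<le> 1/3" using Suc.prems(1) \<open>b \<le> 1/3\<close> by auto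
      from cantor_set_left_third[OF this] show "z \<in> cantor_set" by simp
    qed
    then show ?thesis using Suc.IH[of "3*a" "3*b"] Suc.prems(2) by simp
  next
    case False
    then have "2/3 \<le> a" using Suc.prems cantor_set_gap[of a] by force
    have "{3*a-2..3*b-2} \<subseteq> cantor_set"
    proof
      fix z assume "z \<in> {3*a-2..3*b-2}"
      then have "(z+2)/3 \<in> cantor_set" "2/3 \<le> (z+2)/3" using Suc.prems(1) \<open>2/3 \<le> a\<close> by auto
      moreover have "3 * ((z+2)/3) - 2 = z" by (simp add: field_simps)
      ultimately show "z \<in> cantor_set" using cantor_set_right_third by metis
    qed
    then show ?thesis using Suc.IH[of "3*a-2" "3*b-2"] Suc.prems(2) by simp
  qed
qed

lemma cantor_set_contains_no_interval:
  assumes "a < b"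
  shows "\<not> {a..b} \<subseteq> cantor_set"
proof
  assume "{a..b} \<subseteq> cantor_set"
  obtain n where "(1/3::real) ^ n < b - a" using real_arch_pow_inv[of "b - a" "1/3"] assms by auto
  with cantor_set_interval_length[OF \<open>{a..b} \<subseteq> cantor_set\<close>] assms show False
    by (metis less_eq_real_def not_le)
qed

lemma connected_subset_cantor_set:
  assumes "connected S" "S \<subseteq> cantor_set" "x \<in> S" "y \<in> S"
  shows "x = y"
  using connected_contains_Icc[OF assms(1)] assms(2-4) cantor_set_contains_no_interval
  by (metis linorder_neqE_linordered_idom order_trans)

lemma standard_cantor_fan_top_level:
  assumes "p \<in> standard_cantor_fan" "snd p = 1"
  shows "fst p \<in> cantor_set"
proof -
  obtain c where c: "c \<in> cantor_set" "p \<in> closed_segment (1/2, 0) (c, 1)"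
    using assms(1) unfolding standard_cantor_fan_def by blast
  then obtain u where "p = (1 - u) *\<^sub>R (1/2, 0) + u *\<^sub>R (c, 1)"
    unfolding in_segment by blast
  with assms(2) c(1) show ?thesis by simp
qed

lemma connected_standard_cantor_fan_top_level:
  assumes "connected S" "S \<subseteq> standard_cantor_fan" "\<forall>p\<in>S. snd p = 1" "p \<in> S" "q \<in> S"
  shows "p = q"
proof (rule prod_eqI)
  have "connected (fst ` S)"
    by (intro connected_continuous_image continuous_intros assms(1))
  moreover have "fst ` S \<subseteq> cantor_set"
    using assms(2,3) standard_cantor_fan_top_level by blast
  ultimately show "fst p = fst q" using connected_subset_cantor_set assms(4,5) by blast
  show "snd p = snd q" using assms(3-5) by simp
qed

lemma standard_cantor_fan_outer_arc:
  shows "arc (\<lambda>t. (t, \<bar>2 * t - 1\<bar>))"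
    and "path_image (\<lambda>t. (t, \<bar>2 * t - 1\<bar>)) \<subseteq> standard_cantor_fan"
proof -
  show "arc (\<lambda>t. (t, \<bar>2 * t - 1\<bar>))"
    unfolding arc_def path_def inj_on_def by (auto intro!: continuous_intros)
  show "path_image (\<lambda>t. (t, \<bar>2 * t - 1\<bar>)) \<subseteq> standard_cantor_fan"
  proof
    fix q assume "q \<in> path_image (\<lambda>t. (t, \<bar>2 * t - 1\<bar>))"
    then obtain t where t: "0 \<le> t" "t \<le> 1" "q = (t, \<bar>2 * t - 1\<bar>)"
      unfolding path_image_def by auto
    have "q \<in> closed_segment (1/2, 0) (0, 1) \<or> q \<in> closed_segment (1/2, 0) (1, 1)"
    proof (cases "t \<le> 1/2")
      case True
      have "q \<in> closed_segment (1/2, 0) (0, 1)"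
        unfolding in_segment by (rule exI[of _ "1 - 2 * t"]) (use t True in auto)
      then show ?thesis ..
    next
      case False
      have "q \<in> closed_segment (1/2, 0) (1, 1)"
        unfolding in_segment
        by (rule exI[of _ "2 * t - 1"]) (use t False in \<open>auto simp: algebra_simps\<close>)
      then show ?thesis ..
    qed
    then show "q \<in> standard_cantor_fan"
      using zero_in_cantor_set one_in_cantor_set unfolding standard_cantor_fan_def by blast
  qed
qed

lemma connected_cantor_fan_top_level:
  assumes "homeomorphism C standard_cantor_fan f g" "connected P"
    and "P \<subseteq> {p \<in> C. snd (f p) = 1}" "p \<in> P" "q \<in> P"
  shows "p = q"
proof -
  have "connected (f ` P)"
    using homeomorphism_cont1[OF assms(1)] assms(2,3)
    by (auto intro: connected_continuous_image continuous_on_subset)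
  moreover have "f ` P \<subseteq> standard_cantor_fan"
    using homeomorphism_image1[OF assms(1)] assms(3) by blast
  ultimately have "f p = f q"
    using connected_standard_cantor_fan_top_level assms(3-5) by blast
  moreover have "p \<in> C" "q \<in> C" using assms(3-5) by auto
  ultimately show ?thesis using homeomorphism_apply1[OF assms(1)] by metis
qed

lemma end_points_standard_cantor_fan: "end_points standard_cantor_fan \<subseteq> {p. snd p = 1}"
proof
  fix p assume p: "p \<in> end_points standard_cantor_fan"
  then obtain c where "c \<in> cantor_set" "p \<in> closed_segment (1/2, 0) (c, 1)"
    unfolding end_points_def standard_cantor_fan_def by blast
  then obtain u where c: "c \<in> cantor_set" "0 \<le> u" "u \<le> 1"
    "p = (1 - u) *\<^sub>R (1/2, 0) + u *\<^sub>R (c, 1)"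
    unfolding in_segment by blast
  have no_inner_point: "p = pathstart \<gamma> \<or> p = pathfinish \<gamma>"
    if "arc \<gamma>" "path_image \<gamma> \<subseteq> standard_cantor_fan" "p \<in> path_image \<gamma>" for \<gamma>
    using p that unfolding end_points_def arc_between_def by blast
  show "p \<in> {p. snd p = 1}"
  proof (cases "u = 0")
    case False
    have "path_image (linepath (1/2, 0) (c, 1)) \<subseteq> standard_cantor_fan"
      using c(1) unfolding standard_cantor_fan_def by auto
    moreover have "p \<in> path_image (linepath (1/2, 0) (c, 1))"
      using c(2-4) unfolding path_image_linepath in_segment by blast
    ultimately have "p = (1/2, 0) \<or> p = (c, 1)"
      using no_inner_point[OF arc_linepath] by simp
    then show ?thesis using c(4) False by auto
  next
    case True
    \<comment> \<open>The vertex is an inner point of the arc through the two outermost segments.\<close>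
    define \<gamma> where "\<gamma> = (\<lambda>t::real. (t, \<bar>2 * t - 1\<bar>))"
    have "arc \<gamma>" "path_image \<gamma> \<subseteq> standard_cantor_fan"
      unfolding \<gamma>_def by (rule standard_cantor_fan_outer_arc)+
    moreover have "p \<in> path_image \<gamma>"
      unfolding path_image_def \<gamma>_def c(4) True by (rule image_eqI[of _ _ "1/2"]) auto
    ultimately have "p = \<gamma> 0 \<or> p = \<gamma> 1"
      using no_inner_point unfolding pathstart_def pathfinish_def by blast
    then show ?thesis unfolding \<gamma>_def c(4) True by simp
  qed
qed

lemma arc_continuous_injective_image:
  assumes "arc \<gamma>" "continuous_on (path_image \<gamma>) h" "inj_on h (path_image \<gamma>)"
  shows "arc (h \<circ> \<gamma>)"
proof -
  have "simple_path (h \<circ> \<gamma>)"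
    using assms by (intro simple_path_continuous_image arc_imp_simple_path)
  moreover have "pathfinish (h \<circ> \<gamma>) \<noteq> pathstart (h \<circ> \<gamma>)"
    using assms(3) arc_distinct_ends[OF assms(1)] pathstart_in_path_image pathfinish_in_path_image
    unfolding pathstart_compose pathfinish_compose inj_on_def by metis
  ultimately show ?thesis by (simp add: arc_simple_path)
qed

lemma end_points_homeomorphism_image:
  assumes hom: "homeomorphism S T f g" and x: "x \<in> end_points S"
  shows "f x \<in> end_points T"
proof -
  have xS: "x \<in> S" using x unfolding end_points_def by blast
  have "f x = a \<or> f x = b" if A: "A \<subseteq> T" "arc_between A a b" "f x \<in> A" for A a b
  proof -
    obtain \<gamma> where \<gamma>: "arc \<gamma>" "path_image \<gamma> = A" "pathstart \<gamma> = a" "pathfinish \<gamma> = b"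
      using A(2) unfolding arc_between_def by blast
    have "continuous_on A g"
      using homeomorphism_cont2[OF hom] A(1) by (rule continuous_on_subset)
    moreover have "inj_on g A"
      using homeomorphism_apply2[OF hom] A(1) by (metis inj_on_inverseI subsetD)
    ultimately have "arc (g \<circ> \<gamma>)"
      using \<gamma> by (simp add: arc_continuous_injective_image)
    then have "arc_between (g ` A) (g a) (g b)"
      unfolding arc_between_def using \<gamma>
      by (metis path_image_compose pathstart_compose pathfinish_compose)
    moreover have "g ` A \<subseteq> S" using homeomorphism_image2[OF hom] A(1) by blast
    moreover have "x \<in> g ` A" using homeomorphism_apply1[OF hom xS] A(3) by (metis image_eqI)
    ultimately have "x = g a \<or> x = g b" using x unfolding end_points_def by blast
    moreover have "a \<in> T" "b \<in> T"
      using \<gamma> A(1) pathstart_in_path_image pathfinish_in_path_image by blast+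
    ultimately show ?thesis using homeomorphism_apply2[OF hom] by auto
  qed
  moreover have "f x \<in> T" using homeomorphism_image1[OF hom] xS by blast
  ultimately show ?thesis unfolding end_points_def by blast
qed

lemma end_points_Int_subset: "A \<subseteq> B \<Longrightarrow> end_points B \<inter> A \<subseteq> end_points A"
  unfolding end_points_def by blast

lemma ramification_point_not_singleton:
  assumes "ramification_point X v"
  obtains y where "y \<in> X" "y \<noteq> x"
proof -
  obtain A a where "A \<subseteq> X" "arc_between A v a"
    using assms unfolding ramification_point_def simple_triod_with_top_def by auto
  then obtain \<gamma> where \<gamma>: "arc \<gamma>" "path_image \<gamma> \<subseteq> X" "pathstart \<gamma> = v" "pathfinish \<gamma> = a"
    unfolding arc_between_def by blast
  then have "v \<in> X" "a \<in> X"
    using pathstart_in_path_image pathfinish_in_path_image by blast+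
  moreover have "v \<noteq> a" using arc_distinct_ends[OF \<gamma>(1)] \<gamma>(3,4) by simp
  ultimately show thesis using that by blast
qed

lemma openin_subset_closed_if_dense:
  assumes "closure E = L" "openin (top_of_set L) U" "U \<inter> E \<subseteq> K" "closed K"
  shows "U \<subseteq> K"
proof -
  obtain V where V: "open V" "U = L \<inter> V" using assms(2) by (auto simp: openin_open)
  have "U \<subseteq> V \<inter> closure E" using V(2) assms(1) by blast
  also have "\<dots> \<subseteq> closure (V \<inter> E)" by (rule open_Int_closure_subset[OF V(1)])
  also have "\<dots> \<subseteq> closure K"
    using assms(1,3) V(2) closure_subset[of E] by (intro closure_mono) blast
  finally show ?thesis using assms(4) by simp
qed

lemma arc_initial_segment_in_open:
  fixes \<gamma> :: "real \<Rightarrow> 'a::metric_space"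
  assumes "arc \<gamma>" "open V" "pathstart \<gamma> \<in> V"
  obtains t where "0 < t" "t \<le> 1" "\<gamma> ` {0..t} \<subseteq> V"
proof -
  obtain \<epsilon> where "\<epsilon> > 0" "ball (\<gamma> 0) \<epsilon> \<subseteq> V"
    using assms(2,3) open_contains_ball unfolding pathstart_def by blast
  moreover obtain d where "d > 0" "\<forall>t\<in>{0..1}. dist t 0 < d \<longrightarrow> dist (\<gamma> t) (\<gamma> 0) < \<epsilon>"
    using arc_imp_path[OF assms(1)] \<open>\<epsilon> > 0\<close> unfolding path_def continuous_on_iff
    by (metis atLeastAtMost_iff order_refl zero_le_one)
  ultimately have "\<gamma> ` {0..min 1 (d/2)} \<subseteq> V"
    by (force simp: dist_commute)
  then show thesis using that[of "min 1 (d/2)"] \<open>d > 0\<close> by simp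
qed

lemma arcwise_connected_openin_nontrivial_connected_subset:
  assumes "arcwise_connected L" "openin (top_of_set L) U" "x \<in> U" "y \<in> L" "y \<noteq> x"
  obtains P p q where "P \<subseteq> U" "connected P" "p \<in> P" "q \<in> P" "p \<noteq> q"
proof -
  obtain V where V: "open V" "U = L \<inter> V" using assms(2) by (auto simp: openin_open)
  then have "x \<in> L" using assms(3) by simp
  then have "\<exists>A. A \<subseteq> L \<and> arc_between A x y"
    using assms(1,4,5) unfolding arcwise_connected_def by auto
  then obtain A where "A \<subseteq> L" "arc_between A x y" by blast
  then obtain \<gamma> where \<gamma>: "arc \<gamma>" "path_image \<gamma> \<subseteq> L" "pathstart \<gamma> = x"
    unfolding arc_between_def by blast
  then obtain t where t: "0 < t" "t \<le> 1" "\<gamma> ` {0..t} \<subseteq> V"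
    using arc_initial_segment_in_open V assms(3) by blast
  have "\<gamma> ` {0..t} \<subseteq> U" using t(2,3) \<gamma>(2) V(2) unfolding path_image_def by auto
  moreover have "connected (\<gamma> ` {0..t})"
    using arc_imp_path[OF \<gamma>(1)] t(2) unfolding path_def
    by (intro connected_continuous_image) (auto elim: continuous_on_subset)
  moreover have "\<gamma> 0 \<noteq> \<gamma> t"
    using arc_imp_inj_on[OF \<gamma>(1)] t(1,2) unfolding inj_on_def by force
  ultimately show thesis using that[of "\<gamma> ` {0..t}" "\<gamma> 0" "\<gamma> t"] t(1) by force
qed

theorem mainTheorem2:
  fixes L C :: "'a::metric_space set"
  assumes "lelek_fan L"
    and "C \<subseteq> L" and "continuum C" and "cantor_fan C"
  shows "(top_of_set L) interior_of ((top_of_set L) closure_of C) = {}"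
proof (rule ccontr)
  obtain v where "smooth_fan_with_top L v" and dense: "closure (end_points L) = L"
    using assms(1) unfolding lelek_fan_def by blast
  then have arcw: "arcwise_connected L" and ram: "ramification_point L v"
    unfolding smooth_fan_with_top_def fan_def dendroid_def by auto
  obtain f g where hom: "homeomorphism C standard_cantor_fan f g"
    using assms(4) unfolding cantor_fan_def homeomorphic_def by blast
  define K where "K = {p \<in> C. snd (f p) = 1}"
  have "closed C" using assms(3) compact_imp_closed unfolding continuum_def by blast
  then have "closed K"
    unfolding K_def
    by (intro continuous_closed_preimage_constant continuous_intros homeomorphism_cont1[OF hom])
  have "(top_of_set L) closure_of C = C"
    using closure_of_closedin closed_subset[OF assms(2) \<open>closed C\<close>] by blast
  moreover assume "(top_of_set L) interior_of ((top_of_set L) closure_of C) \<noteq> {}"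
  ultimately obtain x U where U: "openin (top_of_set L) U" "x \<in> U" "U \<subseteq> C"
    unfolding interior_of_def by auto
  have "U \<inter> end_points L \<subseteq> K"
    using end_points_Int_subset[OF assms(2)] end_points_homeomorphism_image[OF hom]
      end_points_standard_cantor_fan U(3) unfolding K_def by blast
  then have UK: "U \<subseteq> K" by (rule openin_subset_closed_if_dense[OF dense U(1) _ \<open>closed K\<close>])
  obtain y where "y \<in> L" "y \<noteq> x" using ramification_point_not_singleton[OF ram] .
  then obtain P p q where P: "P \<subseteq> U" "connected P" "p \<in> P" "q \<in> P" "p \<noteq> q"
    using arcwise_connected_openin_nontrivial_connected_subset[OF arcw U(1,2)] by blast
  then show False using connected_cantor_fan_top_level[OF hom P(2)] UK unfolding K_def by blast
qed

end
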